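(* Let $n\ge 1$ and consider the $n$-qubit bit flip (repetition) code, with encoded states $\overline{|0\rangle}=|0\rangle^{\otimes n}$ and $\overline{|1\rangle}=|1\rangle^{\otimes n}$. Suppose each of the $n$ physical qubits independently suffers the Pauli error $\sigma\in\{I,X,Y,Z\}$ with probability $p_\sigma$, where $p_I+p_X+p_Y+p_Z=1$. Put $q_X=p_X+p_Y$ and, for $0\le k\le n$, $$a_k=\binom{n}{k}q_X^k(1-q_X)^{n-k},\qquad b_k=\binom{n}{k}(p_X-p_Y)^k(p_I-p_Z)^{n-k}.$$ For $0\le k<\frac n2$, the probability $l_\sigma(k)$ of measuring a syndrome corresponding to an error of distance $k$ and having resulting logical error $\sigma$ is $$l_I(k)=\frac{a_k+b_k}{2},\quad l_X(k)=\frac{a_{n-k}+b_{n-k}}{2},\quad l_Y(k)=\frac{a_{n-k}-b_{n-k}}{2},\quad l_Z(k)=\frac{a_k-b_k}{2}.$$ If $n$ is even, then for $k=\frac n2$, $$l_I(\tfrac n2)=l_X(\tfrac n2)=\frac{a_{n/2}+b_{n/2}}{4},\qquad l_Y(\tfrac n2)=l_Z(\tfrac n2)=\frac{a_{n/2}-b_{n/2}}{4}.$$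
   Context: An $n$-qubit Pauli error $E$ (tensor product of single-qubit Paulis, up to phase) has a bit-flip pattern $s\in\{0,1\}^n$, where $s_i=1$ iff the $i$-th factor is $X$ or $Y$. Syndrome measurement of the bit flip code (stabilizers $Z_iZ_{i+1}$) reveals $s$ up to complementation, i.e. the unordered pair $\{s,\bar s\}$. Such a syndrome is said to correspond to an error of distance $k=\min(|s|,n-|s|)$, where $|s|$ is the Hamming weight. Recovery applies $X$ on the qubits of the minimum-weight representative of $\{s,\bar s\}$ (when $|s|=n/2$, a fixed choice of one of the two representatives is made). After recovery the residual operator equals, up to phase and stabilizers, a logical operator $\overline{X}^{\alpha}\overline{Z}^{\beta}$, where $\alpha=1$ iff the applied representative differs from $s$ (i.e. a logical bit flip occurred) and $\beta=1$ iff the total number of phase-type components of the residual is odd (a logical phase flip). The logical error $\sigma$ is $I,X,Z,Y$ for $(\alpha,\beta)=(0,0),(1,0),(0,1),(1,1)$ respectively. *)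

theory Defs
  imports Complex_Main
begin

datatype pauli = PI | PX | PY | PZ

fun flips :: "pauli \<Rightarrow> bool" where
  "flips PX = True" | "flips PY = True" | "flips PI = False" | "flips PZ = False"

fun phase_type :: "pauli \<Rightarrow> bool" where
  "phase_type PZ = True" | "phase_type PY = True" | "phase_type PI = False" | "phase_type PX = False"

fun pmult :: "pauli \<Rightarrow> pauli \<Rightarrow> pauli" where
  "pmult PI b = b"
| "pmult a PI = a"
| "pmult PX PX = PI" | "pmult PY PY = PI" | "pmult PZ PZ = PI"
| "pmult PX PY = PZ" | "pmult PY PX = PZ"
| "pmult PX PZ = PY" | "pmult PZ PX = PY"
| "pmult PY PZ = PX" | "pmult PZ PY = PX"

definition pattern :: "pauli list \<Rightarrow> bool list" where
  "pattern E = map flips E"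

definition weight :: "bool list \<Rightarrow> nat" where
  "weight s = count_list s True"

definition compl :: "bool list \<Rightarrow> bool list" where
  "compl s = map Not s"

text \<open>Distance of the syndrome {s, compl s}.\<close>
definition err_dist :: "pauli list \<Rightarrow> nat" where
  "err_dist E = min (weight (pattern E)) (length E - weight (pattern E))"

text \<open>Minimum-weight representative; c is the fixed choice used when |s| = n/2.\<close>
definition recov :: "(bool list \<Rightarrow> bool list) \<Rightarrow> bool list \<Rightarrow> bool list" where
  "recov c s = (if 2 * weight s < length s then s
                else if 2 * weight s > length s then compl s
                else c s)"

definition residual :: "(bool list \<Rightarrow> bool list) \<Rightarrow> pauli list \<Rightarrow> pauli list" where
  "residual c E = map2 (\<lambda>e r. if r then pmult e PX else e) E (recov c (pattern E))"

definition logical_error :: "(bool list \<Rightarrow> bool list) \<Rightarrow> pauli list \<Rightarrow> pauli" where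
  "logical_error c E =
     (let \<alpha> = (recov c (pattern E) \<noteq> pattern E);
          \<beta> = odd (length (filter phase_type (residual c E)))
      in if \<not> \<alpha> \<and> \<not> \<beta> then PI else if \<alpha> \<and> \<not> \<beta> then PX
         else if \<not> \<alpha> \<and> \<beta> then PZ else PY)"

definition err_prob :: "(pauli \<Rightarrow> real) \<Rightarrow> pauli list \<Rightarrow> real" where
  "err_prob p E = prod_list (map p E)"

definition lprob :: "nat \<Rightarrow> (pauli \<Rightarrow> real) \<Rightarrow> (bool list \<Rightarrow> bool list) \<Rightarrow> pauli \<Rightarrow> nat \<Rightarrow> real" where
  "lprob n p c \<sigma> k = (\<Sum>E\<in>{E. length E = n \<and> err_dist E = k \<and> logical_error c E = \<sigma>}. err_prob p E)"

definition valid_choice :: "nat \<Rightarrow> (bool list \<Rightarrow> bool list) \<Rightarrow> bool" where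
  "valid_choice n c \<longleftrightarrow> (\<forall>s. length s = n \<and> 2 * weight s = n \<longrightarrow>
       (c s = s \<or> c s = compl s) \<and> c (compl s) = c s)"

end

theory Submission
  imports Defs
begin

text \<open>Summing p(E) t^(number of Z/Y factors of E) over the errors E with a fixed bit-flip
  pattern of weight w factorises qubit by qubit into (p_X + t p_Y)^w (p_I + t p_Z)^(n-w).
  At t = 1 and t = -1 this gives a_w and b_w up to the factor binom(n,w), so half their sum
  (difference) is the probability of the pattern together with even (odd) phase parity.
  Recovery applies only X, which never changes the phase type of a factor, so the logical
  phase flip is the phase parity of E; the logical bit flip happens exactly for patterns of
  weight above n/2, and at weight n/2 complementation pairs the patterns the fixed choice
  keeps with those it flips.\<close>

lemma finite_lists_of_length: "finite {xs :: 'a::finite list. length xs = n}"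
  using finite_lists_length_eq[of "UNIV :: 'a set" n] by simp

instance pauli :: finite
proof
  have "(UNIV :: pauli set) = {PI, PX, PY, PZ}"
    using pauli.exhaust by auto
  then show "finite (UNIV :: pauli set)"
    by (metis finite.emptyI finite_insert)
qed

lemma weight_Cons: "weight (b # s) = (if b then Suc (weight s) else weight s)"
  by (simp add: weight_def)

lemma weight_le_length: "weight s \<le> length s"
  by (simp add: weight_def count_le_length)

lemma length_compl [simp]: "length (compl s) = length s"
  by (simp add: compl_def)

lemma compl_compl [simp]: "compl (compl s) = s"
  by (simp add: compl_def comp_def)

lemma weight_compl: "weight (compl s) = length s - weight s"
  by (induction s) (auto simp: compl_def weight_def weight_Cons Suc_diff_le count_le_length)

lemma compl_neq_self: "s \<noteq> [] \<Longrightarrow> compl s \<noteq> s"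
  by (cases s) (auto simp: compl_def)

lemma card_bool_lists_weight:
  "card {s::bool list. length s = n \<and> weight s = w} = n choose w"
proof (induction n arbitrary: w)
  case 0
  have "{s::bool list. length s = 0 \<and> weight s = w} = (if w = 0 then {[]} else {})"
    by (auto simp: weight_def)
  then show ?case by simp
next
  case (Suc n)
  let ?W = "\<lambda>w. {s::bool list. length s = n \<and> weight s = w}"
  have fin: "finite (?W v)" for v
    by (rule finite_subset[OF _ finite_lists_of_length[of n]]) auto
  show ?case
  proof (cases w)
    case 0
    have "{s. length s = Suc n \<and> weight s = w} = Cons False ` ?W 0"
      by (auto simp: 0 length_Suc_conv weight_Cons split: if_splits)
    then show ?thesis using Suc.IH[of 0] by (simp add: 0 card_image)
  next
    case (Suc v)
    have "{s. length s = Suc n \<and> weight s = w} = Cons True ` ?W v \<union> Cons False ` ?W w"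
      by (auto simp: Suc length_Suc_conv weight_Cons split: if_splits)
    moreover have "Cons True ` ?W v \<inter> Cons False ` ?W w = {}" by auto
    ultimately have "card {s. length s = Suc n \<and> weight s = w} = card (?W v) + card (?W w)"
      by (simp add: card_Un_disjoint fin card_image)
    then show ?thesis using Suc.IH by (simp add: Suc)
  qed
qed

text \<open>Complementation is a bijection between the balanced patterns that c keeps and
  those it complements.\<close>
lemma card_balanced_choice:
  assumes c: "valid_choice n c" and n: "n = 2 * m" and "m \<ge> 1"
  shows "2 * card {s. length s = n \<and> weight s = m \<and> (c s \<noteq> s) = \<alpha>} = n choose m"
proof -
  let ?S = "\<lambda>\<alpha>. {s. length s = n \<and> weight s = m \<and> (c s \<noteq> s) = \<alpha>}"
  have fin: "finite (?S \<alpha>)" for \<alpha>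
    by (rule finite_subset[OF _ finite_lists_of_length[of n]]) auto
  have swap: "compl ` ?S \<alpha> = ?S (\<not> \<alpha>)" for \<alpha>
  proof -
    have "compl s \<in> ?S (\<not> \<alpha>)" if "s \<in> ?S \<alpha>" for s \<alpha>
    proof -
      have "s \<noteq> []" using that n \<open>m \<ge> 1\<close> by auto
      moreover have "c (compl s) = c s" "c s = s \<or> c s = compl s"
        using c that n by (auto simp: valid_choice_def)
      ultimately show ?thesis
        using that n compl_neq_self[of s] by (auto simp: weight_compl)
    qed
    from this[of _ \<alpha>] this[of _ "\<not> \<alpha>"] show ?thesis
      by (auto intro: image_eqI[where x = "compl s" for s])
  qed
  have "{s. length s = n \<and> weight s = m} = ?S \<alpha> \<union> ?S (\<not> \<alpha>)" by auto
  then have "n choose m = card (?S \<alpha> \<union> ?S (\<not> \<alpha>))"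
    by (simp only: card_bool_lists_weight[symmetric])
  also have "\<dots> = card (?S \<alpha>) + card (?S (\<not> \<alpha>))"
    by (rule card_Un_disjoint[OF fin fin]) auto
  also have "card (?S (\<not> \<alpha>)) = card (compl ` ?S \<alpha>)"
    by (simp only: swap)
  also have "\<dots> = card (?S \<alpha>)"
    by (rule card_image, rule inj_on_inverseI[where g = compl]) simp
  finally show ?thesis by simp
qed

definition phase_count :: "pauli list \<Rightarrow> nat" where
  "phase_count E = length (filter phase_type E)"

definition pattern_gf :: "(pauli \<Rightarrow> 'a::comm_semiring_1) \<Rightarrow> 'a \<Rightarrow> nat \<Rightarrow> nat \<Rightarrow> 'a" where
  "pattern_gf p t n w = (p PX + t * p PY) ^ w * (p PI + t * p PZ) ^ (n - w)"

lemma finite_pattern_preimage: "finite {E. map flips E = s}"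
  by (rule finite_subset[OF _ finite_lists_of_length[of "length s"]]) auto

lemma sum_flips_eq:
  fixes p :: "pauli \<Rightarrow> 'a::comm_semiring_1"
  shows "(\<Sum>e | flips e = b. t ^ (if phase_type e then 1 else 0) * p e) =
     (if b then p PX + t * p PY else p PI + t * p PZ)"
proof -
  have "{e. flips e = b} = (if b then {PX, PY} else {PI, PZ})"
    by (cases b) (auto elim: flips.elims)
  then show ?thesis by (simp add: add.commute)
qed

lemma sum_pattern_preimage_gf:
  "(\<Sum>E | map flips E = s. t ^ phase_count E * prod_list (map p E)) =
     pattern_gf p t (length s) (weight s)"
proof (induction s)
  case Nil
  have "{E. map flips E = []} = {[]}" by auto
  then show ?case by (simp add: phase_count_def pattern_gf_def weight_def)
next
  case (Cons b s)
  let ?A = "{e. flips e = b}" and ?B = "{E. map flips E = s}"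
  let ?g = "\<lambda>E. t ^ phase_count E * prod_list (map p E)"
  have split: "{E. map flips E = b # s} = (\<lambda>(e, E). e # E) ` (?A \<times> ?B)"
    by (auto simp: Cons_eq_map_conv image_def)
  have inj: "inj_on (\<lambda>(e, E). e # E) (?A \<times> ?B)"
    by (auto simp: inj_on_def)
  have "(\<Sum>E | map flips E = b # s. ?g E) = (\<Sum>x\<in>?A \<times> ?B. ?g ((\<lambda>(e, E). e # E) x))"
    unfolding split by (subst sum.reindex[OF inj]) (simp only: comp_def)
  also have "\<dots> = (\<Sum>e\<in>?A. \<Sum>E\<in>?B. (t ^ (if phase_type e then 1 else 0) * p e) * ?g E)"
    by (subst sum.cartesian_product) (auto simp: phase_count_def mult_ac intro!: sum.cong)
  also have "\<dots> = (\<Sum>e\<in>?A. t ^ (if phase_type e then 1 else 0) * p e) * (\<Sum>E\<in>?B. ?g E)"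
    by (simp add: sum_product)
  also have "\<dots> = pattern_gf p t (length (b # s)) (weight (b # s))"
    unfolding Cons sum_flips_eq using weight_le_length[of s]
    by (simp add: pattern_gf_def weight_Cons Suc_diff_le mult_ac)
  finally show ?case .
qed

lemma sum_filter_parity:
  fixes f :: "'a \<Rightarrow> 'b::field_char_0"
  assumes "finite A"
  shows "(\<Sum>x | x \<in> A \<and> odd (g x) = \<beta>. f x) =
           ((\<Sum>x\<in>A. f x) + (if \<beta> then -1 else 1) * (\<Sum>x\<in>A. (-1) ^ g x * f x)) / 2"
proof -
  have "(\<Sum>x | x \<in> A \<and> odd (g x) = \<beta>. f x) = (\<Sum>x\<in>A. if odd (g x) = \<beta> then f x else 0)"
    using sum.inter_filter[OF assms] by simp
  also have "\<dots> = (\<Sum>x\<in>A. (f x + (if \<beta> then -1 else 1) * ((-1) ^ g x * f x)) / 2)"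
    by (rule sum.cong) (auto simp: minus_one_power_iff)
  finally show ?thesis
    by (simp add: sum_divide_distrib[symmetric] sum.distrib sum_distrib_left)
qed

definition pattern_parity_prob :: "(pauli \<Rightarrow> real) \<Rightarrow> bool \<Rightarrow> nat \<Rightarrow> nat \<Rightarrow> real" where
  "pattern_parity_prob p \<beta> n w =
     (pattern_gf p 1 n w + (if \<beta> then -1 else 1) * pattern_gf p (-1) n w) / 2"

lemma sum_pattern_parity:
  "(\<Sum>E | map flips E = s \<and> odd (phase_count E) = \<beta>. err_prob p E) =
     pattern_parity_prob p \<beta> (length s) (weight s)"
  using sum_filter_parity[OF finite_pattern_preimage,
      where g = phase_count and \<beta> = \<beta> and f = "err_prob p"]
    sum_pattern_preimage_gf[of 1 p s] sum_pattern_preimage_gf[of "-1" p s]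
  by (simp add: pattern_parity_prob_def err_prob_def)

lemma phase_count_map2_flip:
  "length r = length E \<Longrightarrow>
     phase_count (map2 (\<lambda>e r. if r then pmult e PX else e) E r) = phase_count E"
proof (induction E arbitrary: r)
  case Nil
  then show ?case by simp
next
  case (Cons e E)
  then obtain x r' where "r = x # r'" "length r' = length E"
    by (cases r) auto
  moreover have "phase_type (pmult e PX) = phase_type e"
    by (cases e) auto
  ultimately show ?case
    using Cons.IH by (simp add: phase_count_def)
qed

lemma length_recov: "valid_choice n c \<Longrightarrow> length s = n \<Longrightarrow> length (recov c s) = n"
  by (auto simp: recov_def valid_choice_def compl_def)

lemma logical_error_eq_iff:
  assumes "valid_choice n c" and "length E = n"
  shows "logical_error c E = \<sigma> \<longleftrightarrow>
           (recov c (pattern E) \<noteq> pattern E) = flips \<sigma> \<and> odd (phase_count E) = phase_type \<sigma>"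
proof -
  have "length (recov c (pattern E)) = length E"
    using length_recov[OF assms(1)] assms(2) by (simp add: pattern_def)
  then have "length (filter phase_type (residual c E)) = phase_count E"
    unfolding residual_def phase_count_def[symmetric] by (rule phase_count_map2_flip)
  then show ?thesis
    by (cases \<sigma>) (auto simp: logical_error_def Let_def)
qed

lemma lprob_eq_sum_patterns:
  assumes "valid_choice n c"
  shows "lprob n p c \<sigma> k =
    (\<Sum>s | length s = n \<and> min (weight s) (n - weight s) = k \<and> (recov c s \<noteq> s) = flips \<sigma>.
       pattern_parity_prob p (phase_type \<sigma>) n (weight s))"
proof -
  let ?S = "{s. length s = n \<and> min (weight s) (n - weight s) = k \<and> (recov c s \<noteq> s) = flips \<sigma>}"
  let ?A = "\<lambda>s. {E. map flips E = s \<and> odd (phase_count E) = phase_type \<sigma>}"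
  have "{E. length E = n \<and> err_dist E = k \<and> logical_error c E = \<sigma>} =
    {E. length E = n \<and> err_dist E = k \<and> (recov c (pattern E) \<noteq> pattern E) = flips \<sigma>
        \<and> odd (phase_count E) = phase_type \<sigma>}"
    using logical_error_eq_iff[OF assms] by blast
  also have "\<dots> = \<Union> (?A ` ?S)"
    by (auto simp: err_dist_def pattern_def)
  finally have events:
    "{E. length E = n \<and> err_dist E = k \<and> logical_error c E = \<sigma>} = \<Union> (?A ` ?S)" .
  have "finite ?S"
    by (rule finite_subset[OF _ finite_lists_of_length[of n]]) auto
  moreover have "finite (?A s)" for s
    by (rule finite_subset[OF _ finite_pattern_preimage[of s]]) auto
  ultimately have "lprob n p c \<sigma> k = (\<Sum>s\<in>?S. \<Sum>E\<in>?A s. err_prob p E)"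
    unfolding lprob_def events by (subst sum.UNION_disjoint) auto
  also have "\<dots> = (\<Sum>s\<in>?S. pattern_parity_prob p (phase_type \<sigma>) n (weight s))"
    by (rule sum.cong) (simp_all add: sum_pattern_parity)
  finally show ?thesis .
qed

text \<open>Below distance n/2 the syndrome fixes the pattern up to complement, and recovery
  undoes the pattern exactly when it has the smaller weight.\<close>
lemma lprob_below_half:
  fixes \<sigma> :: pauli
  assumes c: "valid_choice n c" and k: "2 * k < n"
  defines "w \<equiv> if flips \<sigma> then n - k else k"
  shows "lprob n p c \<sigma> k = real (n choose w) * pattern_parity_prob p (phase_type \<sigma>) n w"
proof -
  have "{s. length s = n \<and> min (weight s) (n - weight s) = k \<and> (recov c s \<noteq> s) = flips \<sigma>}
        = {s. length s = n \<and> weight s = w}"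
  proof (rule Collect_cong)
    fix s :: "bool list"
    show "length s = n \<and> min (weight s) (n - weight s) = k \<and> (recov c s \<noteq> s) = flips \<sigma>
          \<longleftrightarrow> length s = n \<and> weight s = w"
    proof (cases "length s = n")
      case True
      consider "2 * weight s < n" | "2 * weight s = n" | "2 * weight s > n"
        by linarith
      then show ?thesis
      proof cases
        case 1
        then show ?thesis using True k by (auto simp: w_def recov_def)
      next
        case 2
        then show ?thesis using True k by (auto simp: w_def)
      next
        case 3
        then have "s \<noteq> []" by (auto simp: weight_def)
        then show ?thesis
          using 3 True k weight_le_length[of s] compl_neq_self[of s]
          by (auto simp: w_def recov_def)
      qed
    qed simp
  qed
  then have "lprob n p c \<sigma> k =
      (\<Sum>s | length s = n \<and> weight s = w. pattern_parity_prob p (phase_type \<sigma>) n (weight s))"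
    by (simp only: lprob_eq_sum_patterns[OF c])
  also have "\<dots> = real (n choose w) * pattern_parity_prob p (phase_type \<sigma>) n w"
    by (simp add: card_bool_lists_weight)
  finally show ?thesis .
qed

lemma lprob_half:
  assumes c: "valid_choice n c" and n: "n = 2 * m" and "m \<ge> 1"
  shows "lprob n p c \<sigma> m = real (n choose m) / 2 * pattern_parity_prob p (phase_type \<sigma>) n m"
proof -
  let ?S = "{s. length s = n \<and> weight s = m \<and> (c s \<noteq> s) = flips \<sigma>}"
  have "{s. length s = n \<and> min (weight s) (n - weight s) = m \<and> (recov c s \<noteq> s) = flips \<sigma>} = ?S"
  proof (rule Collect_cong)
    fix s :: "bool list"
    have "length s = n \<Longrightarrow> min (weight s) (n - weight s) = m \<longleftrightarrow> weight s = m"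
      using n weight_le_length[of s] by linarith
    moreover have "weight s = m \<Longrightarrow> length s = n \<Longrightarrow> recov c s = c s"
      using n by (simp add: recov_def)
    ultimately show "length s = n \<and> min (weight s) (n - weight s) = m \<and> (recov c s \<noteq> s) = flips \<sigma>
        \<longleftrightarrow> length s = n \<and> weight s = m \<and> (c s \<noteq> s) = flips \<sigma>"
      by auto
  qed
  then have "lprob n p c \<sigma> m = (\<Sum>s\<in>?S. pattern_parity_prob p (phase_type \<sigma>) n (weight s))"
    by (simp only: lprob_eq_sum_patterns[OF c])
  also have "\<dots> = real (card ?S) * pattern_parity_prob p (phase_type \<sigma>) n m"
    by simp
  also have "real (card ?S) = real (n choose m) / 2"
    using arg_cong[OF card_balanced_choice[OF assms, of "flips \<sigma>"], of real] by simp
  finally show ?thesis .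
qed

theorem lemma1:
  fixes n :: nat and p :: "pauli \<Rightarrow> real" and c :: "bool list \<Rightarrow> bool list"
    and a b :: "nat \<Rightarrow> real"
  assumes "n \<ge> 1"
    and "\<And>\<sigma>. p \<sigma> \<ge> 0"
    and "p PI + p PX + p PY + p PZ = 1"
    and "valid_choice n c"
    and "\<And>k. a k = real (n choose k) * (p PX + p PY) ^ k * (1 - (p PX + p PY)) ^ (n - k)"
    and "\<And>k. b k = real (n choose k) * (p PX - p PY) ^ k * (p PI - p PZ) ^ (n - k)"
  shows "(\<forall>k. 2 * k < n \<longrightarrow>
            lprob n p c PI k = (a k + b k) / 2 \<and>
            lprob n p c PX k = (a (n - k) + b (n - k)) / 2 \<and>
            lprob n p c PY k = (a (n - k) - b (n - k)) / 2 \<and>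
            lprob n p c PZ k = (a k - b k) / 2)
       \<and> (even n \<longrightarrow>
            lprob n p c PI (n div 2) = (a (n div 2) + b (n div 2)) / 4 \<and>
            lprob n p c PX (n div 2) = (a (n div 2) + b (n div 2)) / 4 \<and>
            lprob n p c PY (n div 2) = (a (n div 2) - b (n div 2)) / 4 \<and>
            lprob n p c PZ (n div 2) = (a (n div 2) - b (n div 2)) / 4)"
proof -
  have "1 - (p PX + p PY) = p PI + p PZ"
    using assms(3) by simp
  then have a: "a w = real (n choose w) * pattern_gf p 1 n w" for w
    using assms(5) by (simp add: pattern_gf_def)
  have b: "b w = real (n choose w) * pattern_gf p (-1) n w" for w
    using assms(6) by (simp add: pattern_gf_def)
  have "2 * k < n \<Longrightarrow>
            lprob n p c PI k = (a k + b k) / 2 \<and>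
            lprob n p c PX k = (a (n - k) + b (n - k)) / 2 \<and>
            lprob n p c PY k = (a (n - k) - b (n - k)) / 2 \<and>
            lprob n p c PZ k = (a k - b k) / 2" for k
    using lprob_below_half[OF assms(4)]
    by (simp add: a b pattern_parity_prob_def algebra_simps add_divide_distrib diff_divide_distrib)
  moreover have "lprob n p c PI (n div 2) = (a (n div 2) + b (n div 2)) / 4 \<and>
            lprob n p c PX (n div 2) = (a (n div 2) + b (n div 2)) / 4 \<and>
            lprob n p c PY (n div 2) = (a (n div 2) - b (n div 2)) / 4 \<and>
            lprob n p c PZ (n div 2) = (a (n div 2) - b (n div 2)) / 4" if "even n"
  proof -
    have "n = 2 * (n div 2)" and "n div 2 \<ge> 1"
      using that assms(1) by auto
    from lprob_half[OF assms(4) this] show ?thesis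
      by (simp add: a b pattern_parity_prob_def algebra_simps add_divide_distrib diff_divide_distrib)
  qed
  ultimately show ?thesis by blast
qed

end
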